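(* For each $t\in\{0,1,\dots,T-1\}$, $k\in\mathbb{N}_0$ and $i\in\{1,\dots,N\}$, there exists a target level $\delta_i^{(k,t)}\in\mathbb{Z}$ such that in state $(x,k)$ at epoch $t$ the action $a=\delta_i^{(k,t)}$ is optimal if $x<\delta_i^{(k,t)}$ and the action $a=x$ is optimal otherwise; specifically one may take $\delta_i^{(k,t)}$ to be the smallest minimizer over $a\in\mathbb{Z}$ of $G^{N,i}_t(a,k)$. Moreover, with this choice, $\delta_i^{(k,t)}$ is non-decreasing in $k$.
   Context: Spare parts setting. Fix integers $N\ge1$, $T\ge1$, reals $\alpha_0,\beta_0>0$, and for each $i\in\{1,\dots,N\}$ unit costs $c_v^i,c_h^i,c_b^i>0$ (transportation, holding, backorder) with $c_b^i>c_v^i$. $\mathbb{N}_0=\{0,1,2,\dots\}$, $y^+=\max(y,0)$. For real $r>0$ and $p\in(0,1)$, $NB(r,p)$ is the distribution on $\mathbb{N}_0$ with $P(n)=\frac{\Gamma(n+r)}{\Gamma(r)n!}p^r(1-p)^n$; $NB(0,p)$ is the point mass at $0$. For $t\in\{0,\dots,T\}$ let $p_t=\frac{\beta_0+Nt}{\beta_0+Nt+1}$. At epoch $t$ and statistic $k$ let $Z\sim NB(\alpha_0+k,p_t)$, $K\sim NB((N-1)(\alpha_0+k),p_t)$ independent, and $C_i(a,x,k)=c_v^i(a-x)+c_h^i\mathbb{E}[(a-Z)^+]+c_b^i\mathbb{E}[(Z-a)^+]$. Define $\tilde V^{N,i}_T\equiv0$ and for $t=T-1,\dots,0$, $(x,k)\in\mathbb{Z}\times\mathbb{N}_0$: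 $\tilde V^{N,i}_t(x,k)=\min_{a\in\mathbb{Z},a\ge x}\{C_i(a,x,k)+\mathbb{E}[\tilde V^{N,i}_{t+1}(a-Z,k+Z+K)]\}$. An action (post-order inventory level) $a\ge x$ is optimal if it attains this minimum. For $t\in\{0,\dots,T-1\}$ let $G^{N,i}_t(a,k)=c_v^ia+c_h^i\mathbb{E}[(a-Z)^+]+c_b^i\mathbb{E}[(Z-a)^+]+\mathbb{E}[\tilde V^{N,i}_{t+1}(a-Z,k+Z+K)]$, so that $\tilde V^{N,i}_t(x,k)=\min_{a\ge x}\{G^{N,i}_t(a,k)-c_v^ix\}$. *)

theory Defs
  imports "HOL-Analysis.Analysis"
begin

definition nb_pmf :: "real \<Rightarrow> real \<Rightarrow> nat \<Rightarrow> real" where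
  "nb_pmf r p n =
     (if r = 0 then (if n = 0 then 1 else 0)
      else Gamma (real n + r) / (Gamma r * fact n) * p powr r * (1 - p) ^ n)"

definition p_ep :: "real \<Rightarrow> nat \<Rightarrow> nat \<Rightarrow> real" where
  "p_ep beta0 N t = (beta0 + real N * real t) / (beta0 + real N * real t + 1)"

definition E_hold :: "real \<Rightarrow> real \<Rightarrow> nat \<Rightarrow> nat \<Rightarrow> int \<Rightarrow> nat \<Rightarrow> real" where
  "E_hold alpha0 beta0 N t a k =
     (\<Sum>\<^sub>\<infinity>n\<in>UNIV. nb_pmf (alpha0 + real k) (p_ep beta0 N t) n * max (real_of_int a - real n) 0)"

definition E_back :: "real \<Rightarrow> real \<Rightarrow> nat \<Rightarrow> nat \<Rightarrow> int \<Rightarrow> nat \<Rightarrow> real" where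
  "E_back alpha0 beta0 N t a k =
     (\<Sum>\<^sub>\<infinity>n\<in>UNIV. nb_pmf (alpha0 + real k) (p_ep beta0 N t) n * max (real n - real_of_int a) 0)"

definition E_next :: "real \<Rightarrow> real \<Rightarrow> nat \<Rightarrow> nat \<Rightarrow> (int \<Rightarrow> nat \<Rightarrow> real) \<Rightarrow> int \<Rightarrow> nat \<Rightarrow> real" where
  "E_next alpha0 beta0 N t V a k =
     (\<Sum>\<^sub>\<infinity>(z, j)\<in>UNIV.
        nb_pmf (alpha0 + real k) (p_ep beta0 N t) z
        * nb_pmf ((real N - 1) * (alpha0 + real k)) (p_ep beta0 N t) j
        * V (a - int z) (k + z + j))"

definition C_cost :: "real \<Rightarrow> real \<Rightarrow> real \<Rightarrow> real \<Rightarrow> real \<Rightarrow> nat \<Rightarrow> nat \<Rightarrow> int \<Rightarrow> int \<Rightarrow> nat \<Rightarrow> real" where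
  "C_cost cv ch cb alpha0 beta0 N t a x k =
     cv * real_of_int (a - x) + ch * E_hold alpha0 beta0 N t a k + cb * E_back alpha0 beta0 N t a k"

text \<open>Value function indexed by the number m of remaining periods: epoch t = T - m.\<close>
primrec V_rem :: "real \<Rightarrow> real \<Rightarrow> real \<Rightarrow> real \<Rightarrow> real \<Rightarrow> nat \<Rightarrow> nat \<Rightarrow> nat \<Rightarrow> int \<Rightarrow> nat \<Rightarrow> real" where
  "V_rem cv ch cb alpha0 beta0 N T 0 = (\<lambda>x k. 0)"
| "V_rem cv ch cb alpha0 beta0 N T (Suc m) =
     (\<lambda>x k. Inf {C_cost cv ch cb alpha0 beta0 N (T - Suc m) a x k
                  + E_next alpha0 beta0 N (T - Suc m) (V_rem cv ch cb alpha0 beta0 N T m) a k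
                 | a. a \<ge> x})"

definition V_til :: "real \<Rightarrow> real \<Rightarrow> real \<Rightarrow> real \<Rightarrow> real \<Rightarrow> nat \<Rightarrow> nat \<Rightarrow> nat \<Rightarrow> int \<Rightarrow> nat \<Rightarrow> real" where
  "V_til cv ch cb alpha0 beta0 N T t = V_rem cv ch cb alpha0 beta0 N T (T - t)"

definition Q_act :: "real \<Rightarrow> real \<Rightarrow> real \<Rightarrow> real \<Rightarrow> real \<Rightarrow> nat \<Rightarrow> nat \<Rightarrow> nat \<Rightarrow> int \<Rightarrow> int \<Rightarrow> nat \<Rightarrow> real" where
  "Q_act cv ch cb alpha0 beta0 N T t a x k =
     C_cost cv ch cb alpha0 beta0 N t a x k
     + E_next alpha0 beta0 N t (V_til cv ch cb alpha0 beta0 N T (t + 1)) a k"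

definition optimal_act :: "real \<Rightarrow> real \<Rightarrow> real \<Rightarrow> real \<Rightarrow> real \<Rightarrow> nat \<Rightarrow> nat \<Rightarrow> nat \<Rightarrow> int \<Rightarrow> nat \<Rightarrow> int \<Rightarrow> bool" where
  "optimal_act cv ch cb alpha0 beta0 N T t x k a \<longleftrightarrow>
     x \<le> a \<and> (\<forall>b\<ge>x. Q_act cv ch cb alpha0 beta0 N T t a x k \<le> Q_act cv ch cb alpha0 beta0 N T t b x k)"

definition G_fun :: "real \<Rightarrow> real \<Rightarrow> real \<Rightarrow> real \<Rightarrow> real \<Rightarrow> nat \<Rightarrow> nat \<Rightarrow> nat \<Rightarrow> int \<Rightarrow> nat \<Rightarrow> real" where
  "G_fun cv ch cb alpha0 beta0 N T t a k =
     cv * real_of_int a + ch * E_hold alpha0 beta0 N t a k + cb * E_back alpha0 beta0 N t a k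
     + E_next alpha0 beta0 N t (V_til cv ch cb alpha0 beta0 N T (t + 1)) a k"

definition smallest_minimizer :: "(int \<Rightarrow> real) \<Rightarrow> int \<Rightarrow> bool" where
  "smallest_minimizer g d \<longleftrightarrow> (\<forall>b. g d \<le> g b) \<and> (\<forall>b<d. g d < g b)"

end

theory Submission
  imports Defs
begin

text \<open>
  Let \<open>G\<^sub>t(a,k) = c\<^sub>v a + c\<^sub>h E(a-Z)\<^sup>+ + c\<^sub>b E(Z-a)\<^sup>+ + E V\<^sub>t\<^sub>+\<^sub>1(a-Z, k+Z+K)\<close> for an arbitrary
  value function \<open>V\<^sub>t\<^sub>+\<^sub>1\<close>. Backward induction shows that every \<open>V\<^sub>t\<close> is non-negative with linear
  growth, convex in the inventory level with slopes at least \<open>-c\<^sub>v\<close>, and has slopes that do not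
  increase in the statistic \<open>k\<close>. For such \<open>V\<^sub>t\<^sub>+\<^sub>1\<close> the forward difference of \<open>G\<^sub>t\<close> in \<open>a\<close> is
  \<open>c\<^sub>v - c\<^sub>b + (c\<^sub>h + c\<^sub>b) P(Z \<le> a) + E \<Delta>V\<^sub>t\<^sub>+\<^sub>1(a-Z, k+Z+K)\<close>: it is non-decreasing in \<open>a\<close>,
  negative far to the left (where \<open>c\<^sub>b > c\<^sub>v\<close> dominates) and non-negative far to the right.
  So \<open>G\<^sub>t(\<cdot>,k)\<close> has a smallest minimiser \<open>\<delta>\<close>, ordering up to \<open>max x \<delta>\<close> is optimal, and
  \<open>V\<^sub>t(x,k) = G\<^sub>t(max x \<delta>, k) - c\<^sub>v x\<close> inherits the induction hypothesis.
  The forward difference decreases in \<open>k\<close> since the slopes of \<open>V\<^sub>t\<^sub>+\<^sub>1\<close> do and since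
  \<open>NB(r,p)\<close> grows with \<open>r\<close> in the likelihood-ratio order, which pushes \<open>Z\<close> and \<open>K\<close> upwards;
  hence \<open>\<delta>\<close> is non-decreasing in \<open>k\<close>.
\<close>

section \<open>The negative binomial distribution\<close>

context
  fixes r p :: real
  assumes r: "0 \<le> r" and p: "0 < p" "p < 1"
begin

lemma nb_pmf_pochhammer: "nb_pmf r p n = p powr r * pochhammer r n / fact n * (1 - p) ^ n"
proof (cases "r = 0")
  case True
  then show ?thesis using p by (simp add: nb_pmf_def pochhammer_0_left)
next
  case False
  with r have "r \<notin> \<int>\<^sub>\<le>\<^sub>0" by (auto elim!: nonpos_Ints_cases)
  then have "pochhammer r n = Gamma (r + real n) / Gamma r" by (rule pochhammer_Gamma)
  with False show ?thesis by (simp add: nb_pmf_def add.commute)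
qed

lemma nb_pmf_nonneg: "0 \<le> nb_pmf r p n"
  unfolding nb_pmf_pochhammer using r p
  by (intro mult_nonneg_nonneg divide_nonneg_nonneg) (auto simp: pochhammer_prod intro!: prod_nonneg)

lemma nb_pmf_Suc: "nb_pmf r p (Suc n) = nb_pmf r p n * ((real n + r) / (real n + 1) * (1 - p))"
  unfolding nb_pmf_pochhammer by (simp add: pochhammer_rec' field_simps)

text \<open>Normalisation is Newton's binomial series for \<open>(1 - (1 - p)) powr (-r)\<close>.\<close>
lemma nb_pmf_sums: "nb_pmf r p sums 1"
proof -
  have "\<bar>-(1 - p)\<bar> < 1" using p by simp
  from gen_binomial_real[OF this, of "-r"]
  have "(\<lambda>n. ((-r) gchoose n) * (-(1 - p)) ^ n) sums (p powr (-r))" by simp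
  moreover have "((-r) gchoose n) * (-(1 - p)) ^ n = pochhammer r n / fact n * (1 - p) ^ n" for n
  proof -
    have "((-r) gchoose n) * (-(1 - p)) ^ n
          = ((r + n - 1) gchoose n) * ((-1) ^ n * (-1) ^ n) * (1 - p) ^ n"
      by (simp only: gbinomial_minus power_minus[of "1 - p"]) (simp add: mult_ac)
    also have "(-1::real) ^ n * (-1) ^ n = 1" by (simp flip: power_add)
    finally show ?thesis by (simp add: gbinomial_pochhammer')
  qed
  ultimately have "(\<lambda>n. p powr r * (pochhammer r n / fact n * (1 - p) ^ n)) sums (p powr r * p powr (-r))"
    by (intro sums_mult) simp
  moreover have "p powr r * p powr (-r) = 1" using p by (simp flip: powr_add)
  ultimately show ?thesis unfolding nb_pmf_pochhammer by (simp add: mult_ac)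
qed

lemma summable_nb_pmf_mean: "summable (\<lambda>n. nb_pmf r p n * real n)"
proof (rule summable_ratio_test[where c = "(2 - p) / 2" and N = "nat \<lceil>2 * r / p\<rceil> + 1"])
  show "(2 - p) / 2 < 1" using p by simp
  fix n
  assume n: "nat \<lceil>2 * r / p\<rceil> + 1 \<le> n"
  then have "2 * r / p \<le> real n - 1" by linarith
  then have "2 * r \<le> p * (real n - 1)" using p by (simp add: field_simps)
  then have "(1 - p) * (real n + r) \<le> (2 - p) / 2 * real n"
    using r p by (simp add: algebra_simps) (smt (verit) mult_nonneg_nonneg)
  then have "nb_pmf r p n * ((1 - p) * (real n + r)) \<le> nb_pmf r p n * ((2 - p) / 2 * real n)"
    using nb_pmf_nonneg by (rule mult_left_mono)
  moreover have "nb_pmf r p (Suc n) * real (Suc n) = nb_pmf r p n * ((1 - p) * (real n + r))"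
    by (simp add: nb_pmf_Suc field_simps)
  ultimately have "nb_pmf r p (Suc n) * real (Suc n) \<le> (2 - p) / 2 * (nb_pmf r p n * real n)"
    by (simp only: mult_ac)
  then show "norm (nb_pmf r p (Suc n) * real (Suc n)) \<le> (2 - p) / 2 * norm (nb_pmf r p n * real n)"
    using nb_pmf_nonneg by simp
qed

text \<open>The mean \<open>\<mu>\<close> satisfies \<open>\<mu> = (1 - p) (\<mu> + r)\<close> by shifting the recursion \<open>nb_pmf_Suc\<close>.\<close>
lemma nb_pmf_mean_sums: "(\<lambda>n. nb_pmf r p n * real n) sums (r * (1 - p) / p)"
proof -
  let ?g = "\<lambda>n. nb_pmf r p n * real n"
  define \<mu> where "\<mu> = suminf ?g"
  have g: "?g sums \<mu>" unfolding \<mu>_def by (rule summable_sums[OF summable_nb_pmf_mean])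
  then have shifted: "(\<lambda>n. ?g (Suc n)) sums \<mu>" by (subst sums_Suc_iff) simp
  have "?g (Suc n) = (1 - p) * (?g n + r * nb_pmf r p n)" for n
    by (simp add: nb_pmf_Suc field_simps)
  moreover have "(\<lambda>n. (1 - p) * (?g n + r * nb_pmf r p n)) sums ((1 - p) * (\<mu> + r * 1))"
    by (intro sums_mult sums_add g nb_pmf_sums)
  ultimately have "(\<lambda>n. ?g (Suc n)) sums ((1 - p) * (\<mu> + r))" by simp
  with shifted have "\<mu> = (1 - p) * (\<mu> + r)" by (rule sums_unique2)
  then have "\<mu> = r * (1 - p) / p" using p by (simp add: field_simps)
  with g show ?thesis by simp
qed

end

text \<open>Once \<open>NB(r', p)\<close> dominates \<open>NB(r, p)\<close> pointwise it does so at every larger point, since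
  the factor relating consecutive masses in \<open>nb_pmf_Suc\<close> is non-decreasing in \<open>r\<close>.\<close>
lemma nb_pmf_single_crossing:
  assumes "0 \<le> r" "r \<le> r'" "0 < p" "p < 1" and "nb_pmf r p n \<le> nb_pmf r' p n"
  shows "nb_pmf r p (Suc n) \<le> nb_pmf r' p (Suc n)"
proof -
  have r': "0 \<le> r'" using assms by simp
  have "nb_pmf r p n * ((real n + r) / (real n + 1) * (1 - p))
        \<le> nb_pmf r' p n * ((real n + r) / (real n + 1) * (1 - p))"
    using assms by (intro mult_right_mono) auto
  also have "\<dots> \<le> nb_pmf r' p n * ((real n + r') / (real n + 1) * (1 - p))"
    using assms nb_pmf_nonneg[OF r' \<open>0 < p\<close> \<open>p < 1\<close>]
    by (intro mult_left_mono mult_right_mono divide_right_mono) auto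
  finally show ?thesis using assms r' by (simp add: nb_pmf_Suc)
qed

section \<open>Distributions on the naturals with finite mean\<close>

lemma has_sum_diff:
  fixes f g :: "'a \<Rightarrow> 'b::topological_ab_group_add"
  assumes "(f has_sum a) A" and "(g has_sum b) A"
  shows "((\<lambda>x. f x - g x) has_sum (a - b)) A"
  using has_sum_add[OF assms(1), of "\<lambda>x. - g x" "- b"] assms(2) by (simp add: has_sum_uminus)

lemma infsum_diff:
  fixes f g :: "'a \<Rightarrow> 'b::{topological_ab_group_add, t2_space}"
  assumes "f summable_on A" and "g summable_on A"
  shows "(\<Sum>\<^sub>\<infinity>x\<in>A. f x - g x) = (\<Sum>\<^sub>\<infinity>x\<in>A. f x) - (\<Sum>\<^sub>\<infinity>x\<in>A. g x)"
  using assms by (intro infsumI has_sum_diff has_sum_infsum)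

definition finite_mean_pmf :: "(nat \<Rightarrow> real) \<Rightarrow> bool" where
  "finite_mean_pmf w \<longleftrightarrow>
     (\<forall>n. 0 \<le> w n) \<and> (w has_sum 1) UNIV \<and> (\<lambda>n. w n * real n) summable_on UNIV"

definition pmf_mean :: "(nat \<Rightarrow> real) \<Rightarrow> real" where
  "pmf_mean w = (\<Sum>\<^sub>\<infinity>n. w n * real n)"

lemma finite_mean_pmf_nb_pmf:
  assumes "0 \<le> r" "0 < p" "p < 1"
  shows "finite_mean_pmf (nb_pmf r p)"
  unfolding finite_mean_pmf_def using nb_pmf_nonneg[OF assms]
  by (auto intro: sums_nonneg_imp_has_sum[OF nb_pmf_sums[OF assms]]
                  summable_nonneg_imp_summable_on[OF summable_nb_pmf_mean[OF assms]])

lemma pmf_mean_nb_pmf: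
  assumes "0 \<le> r" "0 < p" "p < 1"
  shows "pmf_mean (nb_pmf r p) = r * (1 - p) / p"
  unfolding pmf_mean_def using nb_pmf_nonneg[OF assms]
  by (intro infsumI sums_nonneg_imp_has_sum[OF nb_pmf_mean_sums[OF assms]]) simp

context
  fixes w :: "nat \<Rightarrow> real"
  assumes w: "finite_mean_pmf w"
begin

lemma finite_mean_pmf_nonneg: "0 \<le> w n"
  using w by (simp add: finite_mean_pmf_def)

lemma finite_mean_pmf_has_sum: "(w has_sum 1) UNIV"
  using w by (simp add: finite_mean_pmf_def)

lemma finite_mean_pmf_summable: "w summable_on UNIV"
  using finite_mean_pmf_has_sum by (auto simp: summable_on_def)

lemma finite_mean_pmf_has_sum_mean: "((\<lambda>n. w n * real n) has_sum pmf_mean w) UNIV"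
  using w unfolding finite_mean_pmf_def pmf_mean_def by (simp add: has_sum_infsum)

lemma finite_mean_pmf_has_sum_linear: "((\<lambda>n. w n * (A + B * real n)) has_sum (A + B * pmf_mean w)) UNIV"
proof -
  have "((\<lambda>n. A * w n + B * (w n * real n)) has_sum (A * 1 + B * pmf_mean w)) UNIV"
    by (intro has_sum_add has_sum_cmult_right finite_mean_pmf_has_sum finite_mean_pmf_has_sum_mean)
  then show ?thesis by (simp add: algebra_simps)
qed

lemma finite_mean_pmf_summable_linear:
  assumes "\<And>n. \<bar>h n\<bar> \<le> A + B * real n"
  shows "(\<lambda>n. w n * h n) summable_on UNIV"
proof -
  have "(\<lambda>n. norm (w n * h n)) summable_on UNIV"
  proof (rule summable_on_comparison_test)
    show "(\<lambda>n. w n * (A + B * real n)) summable_on UNIV"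
      using finite_mean_pmf_has_sum_linear by (auto simp: summable_on_def)
    show "norm (w n * h n) \<le> w n * (A + B * real n)" for n
      using finite_mean_pmf_nonneg[of n] assms[of n] by (simp add: abs_mult mult_left_mono)
  qed simp
  then show ?thesis using summable_on_iff_abs_summable_on_real by blast
qed

lemma finite_mean_pmf_summable_bounded:
  assumes "\<And>n. \<bar>h n\<bar> \<le> B"
  shows "(\<lambda>n. w n * h n) summable_on UNIV"
  by (rule finite_mean_pmf_summable_linear[of h B 0]) (use assms in simp)

lemma finite_mean_pmf_infsum_bounded:
  assumes "\<And>n. \<bar>h n\<bar> \<le> B"
  shows "\<bar>\<Sum>\<^sub>\<infinity>n. w n * h n\<bar> \<le> B"
proof -
  have s: "((\<lambda>n. w n * h n) has_sum (\<Sum>\<^sub>\<infinity>n. w n * h n)) UNIV"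
    using finite_mean_pmf_summable_bounded[OF assms] by (rule has_sum_infsum)
  have "(\<Sum>\<^sub>\<infinity>n. w n * h n) \<le> B * 1"
    by (rule has_sum_mono[OF s has_sum_cmult_right[OF finite_mean_pmf_has_sum]])
       (use assms finite_mean_pmf_nonneg in \<open>simp add: abs_le_iff mult.commute mult_right_mono\<close>)
  moreover have "(-B) * 1 \<le> (\<Sum>\<^sub>\<infinity>n. w n * h n)"
  proof (rule has_sum_mono[OF has_sum_cmult_right[OF finite_mean_pmf_has_sum] s])
    show "-B * w n \<le> w n * h n" for n
      using assms[of n] finite_mean_pmf_nonneg[of n] mult_right_mono[of "-B" "h n" "w n"]
      by (simp add: mult.commute)
  qed
  ultimately show ?thesis by simp
qed

end

lemma infsum_pair_iterated:
  fixes a b :: "nat \<Rightarrow> real" and H :: "nat \<Rightarrow> nat \<Rightarrow> real"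
  assumes "(\<lambda>(z, j). a z * b j * H z j) summable_on UNIV"
  shows "(\<Sum>\<^sub>\<infinity>(z, j). a z * b j * H z j) = (\<Sum>\<^sub>\<infinity>z. a z * (\<Sum>\<^sub>\<infinity>j. b j * H z j))"
proof -
  have "(\<Sum>\<^sub>\<infinity>(z, j). a z * b j * H z j) = (\<Sum>\<^sub>\<infinity>z. \<Sum>\<^sub>\<infinity>j. a z * b j * H z j)"
    using infsum_Sigma'_banach[of "\<lambda>z j. a z * b j * H z j" UNIV "\<lambda>_. UNIV"] assms by simp
  also have "\<dots> = (\<Sum>\<^sub>\<infinity>z. a z * (\<Sum>\<^sub>\<infinity>j. b j * H z j))"
    by (simp add: infsum_cmult_right' mult.assoc)
  finally show ?thesis .
qed

context
  fixes f g :: "nat \<Rightarrow> real"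
  assumes f: "finite_mean_pmf f" and g: "finite_mean_pmf g"
begin

lemma finite_mean_pmf_pair_has_sum_linear:
  assumes "0 \<le> A" "0 \<le> B" "0 \<le> C"
  shows "((\<lambda>(z, j). f z * g j * (A + B * real z + C * real j)) has_sum
           (A + B * pmf_mean f + C * pmf_mean g)) UNIV"
proof -
  define W where "W = (\<lambda>(z, j). f z * g j * (A + B * real z + C * real j))"
  have inner: "((\<lambda>j. W (z, j)) has_sum f z * (A + C * pmf_mean g + B * real z)) UNIV" for z
  proof -
    have "((\<lambda>j. f z * (g j * (A + B * real z + C * real j))) has_sum
            f z * (A + B * real z + C * pmf_mean g)) UNIV"
      by (intro has_sum_cmult_right finite_mean_pmf_has_sum_linear[OF g])
    then show ?thesis by (simp add: W_def algebra_simps)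
  qed
  have outer: "((\<lambda>z. f z * (A + C * pmf_mean g + B * real z)) has_sum
                 (A + C * pmf_mean g + B * pmf_mean f)) UNIV"
    by (rule finite_mean_pmf_has_sum_linear[OF f])
  have "W summable_on Sigma UNIV (\<lambda>_. UNIV)"
    by (rule summable_on_SigmaI[OF inner has_sum_imp_summable[OF outer]])
       (use assms finite_mean_pmf_nonneg[OF f] finite_mean_pmf_nonneg[OF g] in \<open>auto simp: W_def\<close>)
  then have "(W has_sum (A + C * pmf_mean g + B * pmf_mean f)) (Sigma UNIV (\<lambda>_. UNIV))"
    by (intro has_sum_SigmaI[OF inner outer])
  then show ?thesis by (simp add: W_def algebra_simps)
qed

lemma finite_mean_pmf_pair_summable_linear:
  assumes H: "\<And>z j. \<bar>H z j\<bar> \<le> A + B * real z + C * real j" and "0 \<le> B" "0 \<le> C"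
  shows "(\<lambda>(z, j). f z * g j * H z j) summable_on UNIV"
proof -
  have "0 \<le> A" using H[of 0 0] by simp
  then have "(\<lambda>(z, j). f z * g j * (A + B * real z + C * real j)) summable_on UNIV"
    using finite_mean_pmf_pair_has_sum_linear assms(2,3) by (auto simp: summable_on_def)
  then have "(\<lambda>x. norm ((\<lambda>(z, j). f z * g j * H z j) x)) summable_on UNIV"
  proof (rule summable_on_comparison_test)
    fix x :: "nat \<times> nat"
    obtain z j where x: "x = (z, j)" by (cases x)
    have "0 \<le> f z * g j"
      using finite_mean_pmf_nonneg[OF f] finite_mean_pmf_nonneg[OF g] by simp
    then show "norm ((\<lambda>(z, j). f z * g j * H z j) x)
               \<le> (\<lambda>(z, j). f z * g j * (A + B * real z + C * real j)) x"
      using H[of z j] by (simp add: x abs_mult[of "f z * g j"] mult_left_mono)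
  qed simp
  then show ?thesis using summable_on_iff_abs_summable_on_real by blast
qed

lemma finite_mean_pmf_pair_has_sum_const: "((\<lambda>(z, j). f z * g j * c) has_sum c) UNIV"
  using has_sum_cmult_right[OF finite_mean_pmf_pair_has_sum_linear[of 1 0 0], of c]
  by (simp add: case_prod_beta' mult.commute)

end

section \<open>Single-crossing comparison of expectations\<close>

text \<open>With \<open>c\<close> the value of \<open>h\<close> at the crossing point, \<open>(g n - f n) (h n - c) \<le> 0\<close> for every \<open>n\<close>,
  and \<open>\<Sum>(g - f) = 0\<close>.\<close>
lemma single_crossing_infsum_le:
  assumes f: "finite_mean_pmf f" and g: "finite_mean_pmf g"
    and crossing: "\<And>n. f n \<le> g n \<Longrightarrow> f (Suc n) \<le> g (Suc n)"
    and h: "antimono h" and bounded: "\<And>n. \<bar>h n\<bar> \<le> B"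
  shows "(\<Sum>\<^sub>\<infinity>n. g n * h n) \<le> (\<Sum>\<^sub>\<infinity>n. f n * h n)"
proof -
  have "\<exists>c. \<forall>n. (g n - f n) * (h n - c) \<le> 0"
  proof (cases "\<exists>n. f n \<le> g n")
    case False
    then have "(g n - f n) * (h n - (-B)) \<le> 0" for n
      using bounded[of n] by (intro mult_nonpos_nonneg) (auto simp: not_le abs_le_iff less_imp_le)
    then show ?thesis by blast
  next
    case True
    define n0 where "n0 = (LEAST n. f n \<le> g n)"
    have above: "f n \<le> g n" if "n0 \<le> n" for n
      using that
    proof (induction rule: dec_induct)
      case base
      show ?case unfolding n0_def using True by (rule LeastI_ex)
    qed (use crossing in blast)
    have below: "g n < f n" if "n < n0" for n
      using not_less_Least[of n "\<lambda>n. f n \<le> g n"] that unfolding n0_def by simp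
    have "(g n - f n) * (h n - h n0) \<le> 0" for n
    proof (cases "n < n0")
      case True
      then show ?thesis using below[OF True] antimonoD[OF h, of n n0] by (simp add: mult_nonpos_nonneg)
    next
      case False
      then show ?thesis using above antimonoD[OF h, of n0 n] by (simp add: mult_nonneg_nonpos)
    qed
    then show ?thesis by blast
  qed
  then obtain c where c: "\<And>n. (g n - f n) * (h n - c) \<le> 0" by blast
  have sum: "((\<lambda>n. (g n * h n - f n * h n) - (c * g n - c * f n)) has_sum
          (((\<Sum>\<^sub>\<infinity>n. g n * h n) - (\<Sum>\<^sub>\<infinity>n. f n * h n)) - (c * 1 - c * 1))) UNIV"
    by (intro has_sum_diff has_sum_cmult_right has_sum_infsum finite_mean_pmf_has_sum f g
              finite_mean_pmf_summable_bounded[OF _ bounded])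
  have le: "(g n * h n - f n * h n) - (c * g n - c * f n) \<le> 0" for n
    using c[of n] by (simp only: left_diff_distrib right_diff_distrib mult.commute)
  have "((\<Sum>\<^sub>\<infinity>n. g n * h n) - (\<Sum>\<^sub>\<infinity>n. f n * h n)) - (c * 1 - c * 1) \<le> 0"
    using has_sum_mono[OF sum has_sum_0[of UNIV "\<lambda>_. 0"]] le by simp
  then show ?thesis by simp
qed

text \<open>Apply the one-dimensional comparison first in \<open>j\<close>, then in \<open>z\<close>.\<close>
lemma single_crossing_pair_infsum_le:
  assumes f1: "finite_mean_pmf f1" and g1: "finite_mean_pmf g1"
    and f2: "finite_mean_pmf f2" and g2: "finite_mean_pmf g2"
    and crossing1: "\<And>n. f1 n \<le> g1 n \<Longrightarrow> f1 (Suc n) \<le> g1 (Suc n)"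
    and crossing2: "\<And>n. f2 n \<le> g2 n \<Longrightarrow> f2 (Suc n) \<le> g2 (Suc n)"
    and H1: "\<And>j. antimono (\<lambda>z. H z j)" and H2: "\<And>z. antimono (H z)"
    and bounded: "\<And>z j. \<bar>H z j\<bar> \<le> B"
  shows "(\<Sum>\<^sub>\<infinity>(z, j). g1 z * g2 j * H z j) \<le> (\<Sum>\<^sub>\<infinity>(z, j). f1 z * f2 j * H z j)"
proof -
  define \<psi> where "\<psi> b z = (\<Sum>\<^sub>\<infinity>j. b j * H z j)" for b z
  have \<psi>_bounded: "\<bar>\<psi> b z\<bar> \<le> B" if "finite_mean_pmf b" for b z
    unfolding \<psi>_def by (rule finite_mean_pmf_infsum_bounded[OF that bounded])
  have pair_summable: "(\<lambda>(z, j). a z * b j * H z j) summable_on UNIV"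
    if "finite_mean_pmf a" "finite_mean_pmf b" for a b
    using finite_mean_pmf_pair_summable_linear[OF that, of H B 0 0] bounded by simp
  have "(\<Sum>\<^sub>\<infinity>(z, j). g1 z * g2 j * H z j) = (\<Sum>\<^sub>\<infinity>z. g1 z * \<psi> g2 z)"
    unfolding \<psi>_def by (rule infsum_pair_iterated[OF pair_summable[OF g1 g2]])
  also have "\<dots> \<le> (\<Sum>\<^sub>\<infinity>z. g1 z * \<psi> f2 z)"
  proof (rule infsum_mono)
    show "(\<lambda>z. g1 z * \<psi> g2 z) summable_on UNIV" "(\<lambda>z. g1 z * \<psi> f2 z) summable_on UNIV"
      by (rule finite_mean_pmf_summable_bounded[OF g1 \<psi>_bounded[OF g2]],
          rule finite_mean_pmf_summable_bounded[OF g1 \<psi>_bounded[OF f2]])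
    have "\<psi> g2 z \<le> \<psi> f2 z" for z
      unfolding \<psi>_def by (rule single_crossing_infsum_le[OF f2 g2 crossing2 H2 bounded])
    then show "g1 z * \<psi> g2 z \<le> g1 z * \<psi> f2 z" for z
      by (intro mult_left_mono finite_mean_pmf_nonneg[OF g1])
  qed
  also have "\<dots> \<le> (\<Sum>\<^sub>\<infinity>z. f1 z * \<psi> f2 z)"
  proof (rule single_crossing_infsum_le[OF f1 g1 crossing1 _ \<psi>_bounded[OF f2]])
    show "antimono (\<psi> f2)"
    proof (rule antimonoI)
      fix m n :: nat
      assume "m \<le> n"
      then have "f2 j * H n j \<le> f2 j * H m j" for j
        by (intro mult_left_mono antimonoD[OF H1] finite_mean_pmf_nonneg[OF f2])
      then show "\<psi> f2 n \<le> \<psi> f2 m"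
        unfolding \<psi>_def
        by (intro infsum_mono finite_mean_pmf_summable_bounded[OF f2 bounded])
    qed
  qed
  also have "\<dots> = (\<Sum>\<^sub>\<infinity>(z, j). f1 z * f2 j * H z j)"
    unfolding \<psi>_def by (rule infsum_pair_iterated[OF pair_summable[OF f1 f2], symmetric])
  finally show ?thesis .
qed

section \<open>Discrete convexity on the integers\<close>

definition forward_diff :: "(int \<Rightarrow> real) \<Rightarrow> int \<Rightarrow> real" where
  "forward_diff g a = g (a + 1) - g a"

lemma le_if_forward_diff_nonneg:
  assumes "\<And>a. d \<le> a \<Longrightarrow> 0 \<le> forward_diff g a" and "d \<le> x" "x \<le> b"
  shows "g x \<le> g b"
  using \<open>x \<le> b\<close>
proof (induction b rule: int_ge_induct)
  case (step b)
  then show ?case using assms(1)[of b] \<open>d \<le> x\<close> by (simp add: forward_diff_def)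
qed simp

lemma less_if_forward_diff_neg:
  assumes "\<And>a. a < d \<Longrightarrow> forward_diff g a < 0" and "b < d"
  shows "g d < g b"
proof -
  have "b \<le> d - 1" using \<open>b < d\<close> by simp
  then show ?thesis
  proof (induction b rule: int_le_induct)
    case base
    show ?case using assms(1)[of "d - 1"] by (simp add: forward_diff_def)
  next
    case (step b)
    then show ?case using assms(1)[of "b - 1"] by (simp add: forward_diff_def)
  qed
qed

lemma smallest_minimizer_exists:
  assumes mono: "mono (forward_diff g)"
    and neg: "forward_diff g a0 < 0" and nonneg: "0 \<le> forward_diff g a1"
  shows "\<exists>d. smallest_minimizer g d"
proof -
  have "a0 < a1"
  proof (rule ccontr)
    assume "\<not> a0 < a1"
    then show False using monoD[OF mono, of a1 a0] neg nonneg by simp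
  qed
  then have ex: "\<exists>n. 0 \<le> forward_diff g (a0 + int n)"
    using nonneg by (intro exI[of _ "nat (a1 - a0)"]) simp
  define n0 where "n0 = (LEAST n. 0 \<le> forward_diff g (a0 + int n))"
  define d where "d = a0 + int n0"
  have n0: "0 \<le> forward_diff g d"
    unfolding d_def n0_def using ex by (rule LeastI_ex)
  have least: "forward_diff g (a0 + int n) < 0" if "n < n0" for n
    using not_less_Least[of n "\<lambda>n. 0 \<le> forward_diff g (a0 + int n)"] that
    unfolding n0_def by simp
  have above: "0 \<le> forward_diff g a" if "d \<le> a" for a
    using n0 monoD[OF mono that] by simp
  have below: "forward_diff g a < 0" if "a < d" for a
  proof (cases "a \<le> a0")
    case True
    then show ?thesis using monoD[OF mono True] neg by simp
  next
    case False
    then show ?thesis using least[of "nat (a - a0)"] that unfolding d_def by simp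
  qed
  have "smallest_minimizer g d"
    unfolding smallest_minimizer_def
  proof (intro conjI allI impI)
    show "g d \<le> g b" for b
    proof (cases "d \<le> b")
      case True
      then show ?thesis using le_if_forward_diff_nonneg[of d g d b] above by simp
    next
      case False
      then show ?thesis using less_if_forward_diff_neg[of d g b] below by simp
    qed
    show "b < d \<Longrightarrow> g d < g b" for b
      by (rule less_if_forward_diff_neg[OF below])
  qed
  then show ?thesis ..
qed

context
  fixes g :: "int \<Rightarrow> real" and d :: int
  assumes min: "smallest_minimizer g d" and mono: "mono (forward_diff g)"
begin

lemma forward_diff_nonneg_iff: "0 \<le> forward_diff g a \<longleftrightarrow> d \<le> a"
proof
  show "d \<le> a" if "0 \<le> forward_diff g a"
  proof (rule ccontr)
    assume "\<not> d \<le> a"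
    then have "forward_diff g a \<le> forward_diff g (d - 1)" using monoD[OF mono, of a "d - 1"] by simp
    moreover have "forward_diff g (d - 1) < 0"
      using min by (simp add: smallest_minimizer_def forward_diff_def)
    ultimately show False using that by simp
  qed
  have "0 \<le> forward_diff g d" using min by (simp add: smallest_minimizer_def forward_diff_def)
  then show "d \<le> a \<Longrightarrow> 0 \<le> forward_diff g a" using monoD[OF mono, of d a] by simp
qed

lemma smallest_minimizer_max_le:
  assumes "x \<le> b"
  shows "g (max x d) \<le> g b"
proof (cases "x \<le> d")
  case True
  then show ?thesis using min by (simp add: smallest_minimizer_def)
next
  case False
  then show ?thesis
    using le_if_forward_diff_nonneg[of d g x b] forward_diff_nonneg_iff assms by simp
qed

lemma smallest_minimizer_le_if_forward_diff_le:
  assumes "smallest_minimizer g' d'" and "\<And>a. forward_diff g' a \<le> forward_diff g a"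
  shows "d \<le> d'"
proof -
  have "0 \<le> forward_diff g' d'"
    using assms(1) by (simp add: smallest_minimizer_def forward_diff_def)
  then show ?thesis using assms(2)[of d'] forward_diff_nonneg_iff[of d'] by simp
qed

end

section \<open>The spare parts model\<close>

locale spare_parts =
  fixes cv ch cb alpha0 beta0 :: real and N T :: nat
  assumes cv_pos: "0 < cv" and ch_pos: "0 < ch" and cv_less_cb: "cv < cb"
    and alpha0_pos: "0 < alpha0" and beta0_pos: "0 < beta0" and N_pos: "1 \<le> N"
begin

abbreviation p :: "nat \<Rightarrow> real" where
  "p t \<equiv> p_ep beta0 N t"

abbreviation pmf_Z :: "nat \<Rightarrow> nat \<Rightarrow> nat \<Rightarrow> real" where
  "pmf_Z t k \<equiv> nb_pmf (alpha0 + real k) (p t)"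

abbreviation pmf_K :: "nat \<Rightarrow> nat \<Rightarrow> nat \<Rightarrow> real" where
  "pmf_K t k \<equiv> nb_pmf ((real N - 1) * (alpha0 + real k)) (p t)"

lemma p_bounds: "0 < p t" "p t < 1"
  using beta0_pos by (auto simp: p_ep_def add_pos_nonneg)

lemma odds_p_le: "(1 - p t) / p t \<le> 1 / beta0"
proof -
  have pos: "0 < beta0 + real N * real t" using beta0_pos by (simp add: add_pos_nonneg)
  then have "(1 - p t) / p t = 1 / (beta0 + real N * real t)" by (simp add: p_ep_def field_simps)
  also have "\<dots> \<le> 1 / beta0" using beta0_pos pos by (simp add: frac_le)
  finally show ?thesis .
qed

lemma shape_Z_nonneg: "0 \<le> alpha0 + real k"
  using alpha0_pos by simp

lemma shape_K_nonneg: "0 \<le> (real N - 1) * (alpha0 + real k)"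
  using alpha0_pos N_pos by simp

lemma finite_mean_pmf_Z: "finite_mean_pmf (pmf_Z t k)"
  by (rule finite_mean_pmf_nb_pmf[OF shape_Z_nonneg p_bounds])

lemma finite_mean_pmf_K: "finite_mean_pmf (pmf_K t k)"
  by (rule finite_mean_pmf_nb_pmf[OF shape_K_nonneg p_bounds])

lemma pmf_ZK_nonneg: "0 \<le> pmf_Z t k z * pmf_K t k j"
  by (intro mult_nonneg_nonneg finite_mean_pmf_nonneg[OF finite_mean_pmf_Z]
      finite_mean_pmf_nonneg[OF finite_mean_pmf_K])

lemma pmf_Z_crossing:
  "k \<le> k' \<Longrightarrow> pmf_Z t k n \<le> pmf_Z t k' n \<Longrightarrow> pmf_Z t k (Suc n) \<le> pmf_Z t k' (Suc n)"
  by (rule nb_pmf_single_crossing[OF shape_Z_nonneg _ p_bounds]) auto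

lemma pmf_K_crossing:
  "k \<le> k' \<Longrightarrow> pmf_K t k n \<le> pmf_K t k' n \<Longrightarrow> pmf_K t k (Suc n) \<le> pmf_K t k' (Suc n)"
  using N_pos by (intro nb_pmf_single_crossing[OF shape_K_nonneg _ p_bounds]) (auto intro!: mult_left_mono)

definition mean_bound :: real where
  "mean_bound = real N * (1 + alpha0) / beta0"

lemma mean_bound_nonneg: "0 \<le> mean_bound"
  using alpha0_pos beta0_pos by (simp add: mean_bound_def)

lemma nb_pmf_mean_le:
  assumes "0 \<le> r" "r \<le> real N * (alpha0 + real k)"
  shows "pmf_mean (nb_pmf r (p t)) \<le> mean_bound * (1 + real k)"
proof -
  have "pmf_mean (nb_pmf r (p t)) = r * ((1 - p t) / p t)"
    using pmf_mean_nb_pmf[OF assms(1) p_bounds] by simp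
  also have "\<dots> \<le> real N * (alpha0 + real k) * (1 / beta0)"
    using assms odds_p_le p_bounds[of t] by (intro mult_mono) auto
  also have "\<dots> \<le> real N * ((1 + alpha0) * (1 + real k)) * (1 / beta0)"
    using alpha0_pos beta0_pos by (intro mult_right_mono mult_left_mono) (auto simp: algebra_simps)
  also have "\<dots> = mean_bound * (1 + real k)"
    by (simp add: mean_bound_def)
  finally show ?thesis .
qed

lemma pmf_mean_Z_le: "pmf_mean (pmf_Z t k) \<le> mean_bound * (1 + real k)"
  using N_pos shape_Z_nonneg mult_right_mono[of 1 "real N" "alpha0 + real k"]
  by (intro nb_pmf_mean_le) auto

lemma pmf_mean_K_le: "pmf_mean (pmf_K t k) \<le> mean_bound * (1 + real k)"
  using shape_Z_nonneg mult_right_mono[of "real N - 1" "real N" "alpha0 + real k"]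
  by (intro nb_pmf_mean_le shape_K_nonneg) auto

abbreviation EH :: "nat \<Rightarrow> int \<Rightarrow> nat \<Rightarrow> real" where
  "EH t \<equiv> E_hold alpha0 beta0 N t"

abbreviation EB :: "nat \<Rightarrow> int \<Rightarrow> nat \<Rightarrow> real" where
  "EB t \<equiv> E_back alpha0 beta0 N t"

definition cdf_Z :: "nat \<Rightarrow> nat \<Rightarrow> int \<Rightarrow> real" where
  "cdf_Z t k a = (\<Sum>\<^sub>\<infinity>n. pmf_Z t k n * (if int n \<le> a then 1 else 0))"

lemma summable_cdf_Z: "(\<lambda>n. pmf_Z t k n * (if int n \<le> a then 1 else 0)) summable_on UNIV"
  by (rule finite_mean_pmf_summable_bounded[OF finite_mean_pmf_Z, of _ 1]) simp

lemma cdf_Z_neg: "a < 0 \<Longrightarrow> cdf_Z t k a = 0"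
  unfolding cdf_Z_def by (rule infsum_0) simp

lemma cdf_Z_mono: "a \<le> b \<Longrightarrow> cdf_Z t k a \<le> cdf_Z t k b"
  unfolding cdf_Z_def
  by (rule infsum_mono[OF summable_cdf_Z summable_cdf_Z])
     (auto simp: finite_mean_pmf_nonneg[OF finite_mean_pmf_Z])

lemma cdf_Z_antimono: "k \<le> k' \<Longrightarrow> cdf_Z t k' a \<le> cdf_Z t k a"
  unfolding cdf_Z_def
  by (rule single_crossing_infsum_le[OF finite_mean_pmf_Z finite_mean_pmf_Z, where B = 1])
     (auto intro: pmf_Z_crossing antimonoI)

lemma cdf_Z_exceeds: "c < 1 \<Longrightarrow> \<exists>a. c < cdf_Z t k a"
proof -
  assume "c < 1"
  have "(\<lambda>n. sum (pmf_Z t k) {..<n}) \<longlonglongrightarrow> 1"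
    using has_sum_imp_sums[OF finite_mean_pmf_has_sum[OF finite_mean_pmf_Z]] by (simp add: sums_def)
  then have "eventually (\<lambda>n. c < sum (pmf_Z t k) {..<n}) sequentially"
    using \<open>c < 1\<close> by (rule order_tendstoD)
  then obtain n where n: "c < sum (pmf_Z t k) {..<n}"
    unfolding eventually_sequentially by blast
  have "cdf_Z t k (int n) = (\<Sum>\<^sub>\<infinity>m\<in>{..<n + 1}. pmf_Z t k m)"
    unfolding cdf_Z_def by (rule infsum_cong_neutral) auto
  also have "\<dots> \<ge> sum (pmf_Z t k) {..<n}"
    by (simp add: finite_mean_pmf_nonneg[OF finite_mean_pmf_Z])
  finally show ?thesis using n by (intro exI[of _ "int n"]) simp
qed

lemma summable_E_hold: "(\<lambda>n. pmf_Z t k n * max (real_of_int a - real n) 0) summable_on UNIV"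
  by (rule finite_mean_pmf_summable_linear[OF finite_mean_pmf_Z, of _ "\<bar>real_of_int a\<bar>" 1]) auto

lemma summable_E_back: "(\<lambda>n. pmf_Z t k n * max (real n - real_of_int a) 0) summable_on UNIV"
  by (rule finite_mean_pmf_summable_linear[OF finite_mean_pmf_Z, of _ "\<bar>real_of_int a\<bar>" 1]) auto

lemma forward_diff_E_hold: "forward_diff (\<lambda>a. EH t a k) a = cdf_Z t k a"
proof -
  have "forward_diff (\<lambda>a. EH t a k) a =
      (\<Sum>\<^sub>\<infinity>n. pmf_Z t k n * max (real_of_int (a + 1) - real n) 0
                 - pmf_Z t k n * max (real_of_int a - real n) 0)"
    unfolding forward_diff_def E_hold_def by (rule infsum_diff[symmetric, OF summable_E_hold summable_E_hold])
  also have "\<dots> = cdf_Z t k a"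
    unfolding cdf_Z_def
    by (rule infsum_cong, cases "int n \<le> a")
       (simp_all add: of_int_le_iff[symmetric] flip: right_diff_distrib)
  finally show ?thesis .
qed

lemma forward_diff_E_back: "forward_diff (\<lambda>a. EB t a k) a = cdf_Z t k a - 1"
proof -
  have "forward_diff (\<lambda>a. EB t a k) a =
      (\<Sum>\<^sub>\<infinity>n. pmf_Z t k n * max (real n - real_of_int (a + 1)) 0
                 - pmf_Z t k n * max (real n - real_of_int a) 0)"
    unfolding forward_diff_def E_back_def by (rule infsum_diff[symmetric, OF summable_E_back summable_E_back])
  also have "\<dots> = (\<Sum>\<^sub>\<infinity>n. pmf_Z t k n * (if int n \<le> a then 1 else 0) - pmf_Z t k n)"
    by (rule infsum_cong, cases "int n \<le> a")
       (simp_all add: of_int_le_iff[symmetric] algebra_simps)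
  also have "\<dots> = cdf_Z t k a - 1"
    unfolding cdf_Z_def
    using infsum_diff[OF summable_cdf_Z finite_mean_pmf_summable[OF finite_mean_pmf_Z]]
          infsumI[OF finite_mean_pmf_has_sum[OF finite_mean_pmf_Z]]
    by simp
  finally show ?thesis .
qed

lemma E_hold_nonneg: "0 \<le> EH t a k"
  unfolding E_hold_def by (rule infsum_nonneg) (simp add: finite_mean_pmf_nonneg[OF finite_mean_pmf_Z])

lemma E_back_nonneg: "0 \<le> EB t a k"
  unfolding E_back_def by (rule infsum_nonneg) (simp add: finite_mean_pmf_nonneg[OF finite_mean_pmf_Z])

lemma infsum_Z_le_linear:
  assumes "\<And>n. h n \<le> \<bar>real_of_int a\<bar> + real n" and "(\<lambda>n. pmf_Z t k n * h n) summable_on UNIV"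
  shows "(\<Sum>\<^sub>\<infinity>n. pmf_Z t k n * h n) \<le> \<bar>real_of_int a\<bar> + mean_bound * (1 + real k)"
proof -
  have "(\<Sum>\<^sub>\<infinity>n. pmf_Z t k n * h n) \<le> \<bar>real_of_int a\<bar> + 1 * pmf_mean (pmf_Z t k)"
    by (rule has_sum_mono[OF has_sum_infsum[OF assms(2)]
                             finite_mean_pmf_has_sum_linear[OF finite_mean_pmf_Z]])
       (use assms(1) finite_mean_pmf_nonneg[OF finite_mean_pmf_Z] in \<open>simp add: mult_left_mono\<close>)
  then show ?thesis using pmf_mean_Z_le[where t = t and k = k] by simp
qed

lemma E_hold_le: "EH t a k \<le> \<bar>real_of_int a\<bar> + mean_bound * (1 + real k)"
  unfolding E_hold_def by (rule infsum_Z_le_linear[OF _ summable_E_hold]) auto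

lemma E_back_le: "EB t a k \<le> \<bar>real_of_int a\<bar> + mean_bound * (1 + real k)"
  unfolding E_back_def by (rule infsum_Z_le_linear[OF _ summable_E_back]) auto

abbreviation EN :: "nat \<Rightarrow> (int \<Rightarrow> nat \<Rightarrow> real) \<Rightarrow> int \<Rightarrow> nat \<Rightarrow> real" where
  "EN t \<equiv> E_next alpha0 beta0 N t"

abbreviation dV :: "(int \<Rightarrow> nat \<Rightarrow> real) \<Rightarrow> int \<Rightarrow> nat \<Rightarrow> real" where
  "dV V x k \<equiv> forward_diff (\<lambda>y. V y k) x"

text \<open>The induction hypothesis of the backward recursion; the linear growth bound is what
  makes the expectations \<open>E_next\<close> of such functions finite.\<close>
definition admissible :: "(int \<Rightarrow> nat \<Rightarrow> real) \<Rightarrow> bool" where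
  "admissible V \<longleftrightarrow>
     (\<forall>x k. 0 \<le> V x k) \<and> (\<exists>M\<ge>0. \<forall>x k. V x k \<le> M * (1 + \<bar>real_of_int x\<bar> + real k)) \<and>
     (\<forall>x k. -cv \<le> dV V x k) \<and> (\<forall>k. mono (\<lambda>x. dV V x k)) \<and> (\<forall>x. antimono (dV V x)) \<and>
     (\<forall>k. \<exists>x. dV V x k \<le> 0)"

lemma linear_bound_after_demand:
  fixes V :: "int \<Rightarrow> nat \<Rightarrow> real"
  assumes "0 \<le> M" and "\<And>x k. V x k \<le> M * (1 + \<bar>real_of_int x\<bar> + real k)"
  shows "V (a - int z) (k + z + j) \<le> M * (1 + \<bar>real_of_int a\<bar> + real k) + 2 * M * real z + M * real j"
proof -
  have "V (a - int z) (k + z + j) \<le> M * (1 + \<bar>real_of_int (a - int z)\<bar> + real (k + z + j))"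
    by (rule assms(2))
  also have "\<dots> \<le> M * (1 + (\<bar>real_of_int a\<bar> + real z) + real (k + z + j))"
    using assms(1) by (intro mult_left_mono) auto
  finally show ?thesis by (simp add: algebra_simps)
qed

context
  fixes V :: "int \<Rightarrow> nat \<Rightarrow> real"
  assumes V: "admissible V"
begin

lemma admissible_nonneg: "0 \<le> V x k"
  using V by (simp add: admissible_def)

lemma admissible_linear_growth: "\<exists>M\<ge>0. \<forall>x k. V x k \<le> M * (1 + \<bar>real_of_int x\<bar> + real k)"
  using V by (simp add: admissible_def)

lemma admissible_slope_ge: "-cv \<le> dV V x k"
  using V by (simp add: admissible_def)

lemma admissible_slope_mono: "x \<le> y \<Longrightarrow> dV V x k \<le> dV V y k"
  using V by (simp add: admissible_def monoD)

lemma admissible_slope_antimono: "k \<le> k' \<Longrightarrow> dV V x k' \<le> dV V x k"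
  using V unfolding admissible_def by (blast dest: antimonoD)

lemma admissible_slope_nonpos: "\<exists>x. dV V x k \<le> 0"
  using V by (simp add: admissible_def)

lemma admissible_slope_after_demand: "dV V (a - int z) (k + z + j) \<le> dV V a k"
  using admissible_slope_mono[where x = "a - int z" and y = a and k = "k + z + j"]
    admissible_slope_antimono[where k = k and k' = "k + z + j" and x = a]
  by simp

lemma admissible_slope_after_demand_bounded: "\<bar>dV V (a - int z) (k + z + j)\<bar> \<le> cv + \<bar>dV V a k\<bar>"
  using admissible_slope_after_demand[where a = a and z = z and k = k and j = j]
    admissible_slope_ge[where x = "a - int z" and k = "k + z + j"] cv_pos
  by linarith

lemma summable_E_next:
  "(\<lambda>(z, j). pmf_Z t k z * pmf_K t k j * V (a - int z) (k + z + j)) summable_on UNIV"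
proof -
  obtain M where M: "0 \<le> M" "\<And>x k. V x k \<le> M * (1 + \<bar>real_of_int x\<bar> + real k)"
    using admissible_linear_growth by blast
  show ?thesis
  proof (rule finite_mean_pmf_pair_summable_linear[OF finite_mean_pmf_Z finite_mean_pmf_K])
    show "\<bar>V (a - int z) (k + z + j)\<bar>
          \<le> M * (1 + \<bar>real_of_int a\<bar> + real k) + 2 * M * real z + M * real j" for z j
      using linear_bound_after_demand[OF M] admissible_nonneg by simp
  qed (use M in auto)
qed

lemma summable_E_next_slope:
  "(\<lambda>(z, j). pmf_Z t k' z * pmf_K t k' j * dV V (a - int z) (k + z + j)) summable_on UNIV"
  by (rule finite_mean_pmf_pair_summable_linear[OF finite_mean_pmf_Z finite_mean_pmf_K, of _ _ 0 0])
     (use admissible_slope_after_demand_bounded in auto)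

lemma forward_diff_E_next: "forward_diff (\<lambda>a. EN t V a k) a = EN t (dV V) a k"
  unfolding forward_diff_def E_next_def
  by (subst infsum_diff[symmetric, OF summable_E_next summable_E_next])
     (simp add: case_prod_beta' algebra_simps)

lemma E_next_nonneg: "0 \<le> EN t V a k"
  unfolding E_next_def
  by (rule infsum_nonneg) (auto intro!: mult_nonneg_nonneg admissible_nonneg pmf_ZK_nonneg)

lemma E_next_le:
  assumes M: "0 \<le> M" "\<And>x k. V x k \<le> M * (1 + \<bar>real_of_int x\<bar> + real k)"
  shows "EN t V a k \<le> M * (1 + \<bar>real_of_int a\<bar> + real k) + 3 * M * mean_bound * (1 + real k)"
proof -
  have "EN t V a k \<le> M * (1 + \<bar>real_of_int a\<bar> + real k) + 2 * M * pmf_mean (pmf_Z t k)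
                      + M * pmf_mean (pmf_K t k)"
    unfolding E_next_def
  proof (rule has_sum_mono[OF has_sum_infsum[OF summable_E_next]
                 finite_mean_pmf_pair_has_sum_linear[OF finite_mean_pmf_Z finite_mean_pmf_K]])
    show "(\<lambda>(z, j). pmf_Z t k z * pmf_K t k j * V (a - int z) (k + z + j)) x
        \<le> (\<lambda>(z, j). pmf_Z t k z * pmf_K t k j *
              (M * (1 + \<bar>real_of_int a\<bar> + real k) + 2 * M * real z + M * real j)) x" for x
      by (simp only: case_prod_unfold, rule mult_left_mono[OF linear_bound_after_demand[OF M] pmf_ZK_nonneg])
  qed (use M admissible_nonneg in auto)
  also have "\<dots> \<le> M * (1 + \<bar>real_of_int a\<bar> + real k) + 2 * M * (mean_bound * (1 + real k))
                  + M * (mean_bound * (1 + real k))"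
    using M(1) pmf_mean_Z_le pmf_mean_K_le by (intro add_mono mult_left_mono order_refl) auto
  finally show ?thesis by (simp add: algebra_simps)
qed

lemma E_next_slope_ge: "-cv \<le> EN t (dV V) a k"
proof -
  have "-cv = (\<Sum>\<^sub>\<infinity>(z, j). pmf_Z t k z * pmf_K t k j * (-cv))"
    by (rule infsumI[symmetric, OF finite_mean_pmf_pair_has_sum_const[OF finite_mean_pmf_Z finite_mean_pmf_K]])
  also have "\<dots> \<le> EN t (dV V) a k"
    unfolding E_next_def
    by (rule infsum_mono[OF has_sum_imp_summable[OF finite_mean_pmf_pair_has_sum_const[OF
                 finite_mean_pmf_Z finite_mean_pmf_K]] summable_E_next_slope])
       (simp only: case_prod_unfold, rule mult_left_mono[OF admissible_slope_ge pmf_ZK_nonneg])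
  finally show ?thesis .
qed

lemma E_next_slope_le: "EN t (dV V) a k \<le> dV V a k"
proof -
  have "EN t (dV V) a k \<le> (\<Sum>\<^sub>\<infinity>(z, j). pmf_Z t k z * pmf_K t k j * dV V a k)"
    unfolding E_next_def
    by (rule infsum_mono[OF summable_E_next_slope has_sum_imp_summable[OF
                 finite_mean_pmf_pair_has_sum_const[OF finite_mean_pmf_Z finite_mean_pmf_K]]])
       (simp only: case_prod_unfold, rule mult_left_mono[OF admissible_slope_after_demand pmf_ZK_nonneg])
  also have "\<dots> = dV V a k"
    by (rule infsumI[OF finite_mean_pmf_pair_has_sum_const[OF finite_mean_pmf_Z finite_mean_pmf_K]])
  finally show ?thesis .
qed

lemma E_next_slope_mono: "a \<le> b \<Longrightarrow> EN t (dV V) a k \<le> EN t (dV V) b k"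
  unfolding E_next_def
  by (rule infsum_mono[OF summable_E_next_slope summable_E_next_slope])
     (simp only: case_prod_unfold, rule mult_left_mono[OF admissible_slope_mono pmf_ZK_nonneg], simp)

text \<open>Monotonicity in the statistic has two sources: the slopes themselves decrease in \<open>k\<close>,
  and a larger \<open>k\<close> shifts both demands \<open>Z\<close> and \<open>K\<close> upwards stochastically, which moves the
  argument of the convex, \<open>k\<close>-antitone slope to where it is smaller.\<close>
lemma E_next_slope_antimono: "k \<le> k' \<Longrightarrow> EN t (dV V) a k' \<le> EN t (dV V) a k"
proof -
  assume "k \<le> k'"
  have "EN t (dV V) a k'
        \<le> (\<Sum>\<^sub>\<infinity>(z, j). pmf_Z t k' z * pmf_K t k' j * dV V (a - int z) (k + z + j))"
    unfolding E_next_def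
    by (rule infsum_mono[OF summable_E_next_slope summable_E_next_slope])
       (simp only: case_prod_unfold, rule mult_left_mono[OF admissible_slope_antimono pmf_ZK_nonneg],
        use \<open>k \<le> k'\<close> in simp)
  also have "\<dots> \<le> EN t (dV V) a k"
    unfolding E_next_def
  proof (rule single_crossing_pair_infsum_le[OF finite_mean_pmf_Z finite_mean_pmf_Z
               finite_mean_pmf_K finite_mean_pmf_K])
    show "pmf_Z t k n \<le> pmf_Z t k' n \<Longrightarrow> pmf_Z t k (Suc n) \<le> pmf_Z t k' (Suc n)" for n
      by (rule pmf_Z_crossing[OF \<open>k \<le> k'\<close>])
    show "pmf_K t k n \<le> pmf_K t k' n \<Longrightarrow> pmf_K t k (Suc n) \<le> pmf_K t k' (Suc n)" for n
      by (rule pmf_K_crossing[OF \<open>k \<le> k'\<close>])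
    show "antimono (\<lambda>z. dV V (a - int z) (k + z + j))" for j
    proof (rule antimonoI)
      fix z z' :: nat
      assume "z \<le> z'"
      then have "dV V (a - int z') (k + z' + j) \<le> dV V (a - int z) (k + z' + j)"
        by (intro admissible_slope_mono) simp
      also have "\<dots> \<le> dV V (a - int z) (k + z + j)"
        using \<open>z \<le> z'\<close> by (intro admissible_slope_antimono) simp
      finally show "dV V (a - int z') (k + z' + j) \<le> dV V (a - int z) (k + z + j)" .
    qed
    show "antimono (\<lambda>j. dV V (a - int z) (k + z + j))" for z
      by (rule antimonoI) (simp add: admissible_slope_antimono)
    show "\<bar>dV V (a - int z) (k + z + j)\<bar> \<le> cv + \<bar>dV V a k\<bar>" for z j
      by (rule admissible_slope_after_demand_bounded)
  qed
  finally show ?thesis .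
qed

end

definition G :: "nat \<Rightarrow> (int \<Rightarrow> nat \<Rightarrow> real) \<Rightarrow> int \<Rightarrow> nat \<Rightarrow> real" where
  "G t V a k = cv * real_of_int a + ch * EH t a k + cb * EB t a k + EN t V a k"

context
  fixes V :: "int \<Rightarrow> nat \<Rightarrow> real"
  assumes V: "admissible V"
begin

lemma forward_diff_G:
  "forward_diff (\<lambda>a. G t V a k) a = cv + ch * cdf_Z t k a + cb * (cdf_Z t k a - 1) + EN t (dV V) a k"
proof -
  have hold: "EH t (a + 1) k = cdf_Z t k a + EH t a k"
    and backorder: "EB t (a + 1) k = cdf_Z t k a - 1 + EB t a k"
    and future: "EN t V (a + 1) k = EN t (dV V) a k + EN t V a k"
    using forward_diff_E_hold forward_diff_E_back forward_diff_E_next[OF V]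
    unfolding forward_diff_def by (simp_all add: diff_eq_eq)
  show ?thesis
    unfolding forward_diff_def G_def hold backorder future by (simp add: algebra_simps)
qed

lemma mono_forward_diff_G: "mono (forward_diff (\<lambda>a. G t V a k))"
proof (rule monoI)
  fix a b :: int
  assume "a \<le> b"
  then have "ch * cdf_Z t k a + cb * (cdf_Z t k a - 1) \<le> ch * cdf_Z t k b + cb * (cdf_Z t k b - 1)"
    using cdf_Z_mono ch_pos cv_pos cv_less_cb by (intro add_mono mult_left_mono diff_right_mono) auto
  then show "forward_diff (\<lambda>a. G t V a k) a \<le> forward_diff (\<lambda>a. G t V a k) b"
    using E_next_slope_mono[OF V \<open>a \<le> b\<close>, of t k] by (simp add: forward_diff_G)
qed

lemma forward_diff_G_antimono:
  assumes "k \<le> k'"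
  shows "forward_diff (\<lambda>a. G t V a k') a \<le> forward_diff (\<lambda>a. G t V a k) a"
proof -
  have "ch * cdf_Z t k' a + cb * (cdf_Z t k' a - 1) \<le> ch * cdf_Z t k a + cb * (cdf_Z t k a - 1)"
    using cdf_Z_antimono[OF assms] ch_pos cv_pos cv_less_cb
    by (intro add_mono mult_left_mono diff_right_mono) auto
  then show ?thesis using E_next_slope_antimono[OF V assms, of t a] by (simp add: forward_diff_G)
qed

lemma G_has_smallest_minimizer: "\<exists>d. smallest_minimizer (\<lambda>a. G t V a k) d"
proof -
  obtain x where x: "dV V x k \<le> 0" using admissible_slope_nonpos[OF V] by blast
  define a0 where "a0 = min (-1) x"
  have "EN t (dV V) a0 k \<le> 0"
    using E_next_slope_le[OF V, of t a0 k] admissible_slope_mono[OF V, of a0 x k] x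
    unfolding a0_def by simp
  then have neg: "forward_diff (\<lambda>a. G t V a k) a0 < 0"
    using cv_less_cb cdf_Z_neg[of a0 t k] unfolding a0_def by (simp add: forward_diff_G)
  have "cb / (ch + cb) < 1" using ch_pos cv_pos cv_less_cb by simp
  then obtain a1 where "cb / (ch + cb) < cdf_Z t k a1" using cdf_Z_exceeds by blast
  then have "cb < (ch + cb) * cdf_Z t k a1" using ch_pos cv_pos cv_less_cb by (simp add: field_simps)
  then have nonneg: "0 \<le> forward_diff (\<lambda>a. G t V a k) a1"
    using E_next_slope_ge[OF V, of t a1 k] by (simp add: forward_diff_G algebra_simps)
  show ?thesis by (rule smallest_minimizer_exists[OF mono_forward_diff_G neg nonneg])
qed

lemma G_minus_linear_nonneg: "0 \<le> G t V a k - cv * real_of_int a"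
  unfolding G_def
  using E_hold_nonneg E_back_nonneg E_next_nonneg[OF V] ch_pos cv_pos cv_less_cb
  by (simp add: add_nonneg_nonneg)

lemma G_minus_linear_growth:
  "\<exists>C\<ge>0. \<forall>a k. G t V a k - cv * real_of_int a \<le> C * (1 + \<bar>real_of_int a\<bar> + real k)"
proof -
  obtain M where M: "0 \<le> M" "\<And>x k. V x k \<le> M * (1 + \<bar>real_of_int x\<bar> + real k)"
    using admissible_linear_growth[OF V] by blast
  define C where "C = (ch + cb) * (1 + mean_bound) + M * (1 + 3 * mean_bound)"
  have "0 \<le> C" unfolding C_def using M ch_pos cv_pos cv_less_cb mean_bound_nonneg by simp
  moreover have "G t V a k - cv * real_of_int a \<le> C * (1 + \<bar>real_of_int a\<bar> + real k)" for a k
  proof -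
    let ?n = "1 + \<bar>real_of_int a\<bar> + real k"
    have linear: "\<bar>real_of_int a\<bar> + mean_bound * (1 + real k) \<le> (1 + mean_bound) * ?n"
      using mean_bound_nonneg by (simp add: algebra_simps)
    have "ch * EH t a k \<le> ch * ((1 + mean_bound) * ?n)"
      using E_hold_le[of t a k] linear ch_pos by (intro mult_left_mono) auto
    moreover have "cb * EB t a k \<le> cb * ((1 + mean_bound) * ?n)"
      using E_back_le[of t a k] linear cv_pos cv_less_cb by (intro mult_left_mono) auto
    moreover have "3 * M * mean_bound * (1 + real k) \<le> 3 * M * mean_bound * ?n"
      using M(1) mean_bound_nonneg by (intro mult_left_mono) auto
    ultimately show ?thesis
      using E_next_le[OF V M, of t a k] unfolding G_def C_def by (simp add: algebra_simps)
  qed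
  ultimately show ?thesis by blast
qed

end

definition bellman :: "nat \<Rightarrow> (int \<Rightarrow> nat \<Rightarrow> real) \<Rightarrow> int \<Rightarrow> nat \<Rightarrow> real" where
  "bellman t V x k = Inf {G t V a k - cv * real_of_int x | a. x \<le> a}"

context
  fixes V :: "int \<Rightarrow> nat \<Rightarrow> real" and t :: nat
  assumes V: "admissible V"
begin

lemma bellman_eq_order_up_to:
  assumes d: "smallest_minimizer (\<lambda>a. G t V a k) d"
  shows "bellman t V x k = G t V (max x d) k - cv * real_of_int x"
  unfolding bellman_def
proof (rule cInf_eq_minimum)
  show "G t V (max x d) k - cv * real_of_int x \<in> {G t V a k - cv * real_of_int x | a. x \<le> a}"
    by auto
  show "G t V (max x d) k - cv * real_of_int x \<le> y"
    if "y \<in> {G t V a k - cv * real_of_int x | a. x \<le> a}" for y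
    using that smallest_minimizer_max_le[OF d mono_forward_diff_G[OF V]] by auto
qed

lemma slope_bellman:
  assumes d: "smallest_minimizer (\<lambda>a. G t V a k) d"
  shows "dV (bellman t V) x k = (if x < d then -cv else forward_diff (\<lambda>a. G t V a k) x - cv)"
  using bellman_eq_order_up_to[OF d, of x] bellman_eq_order_up_to[OF d, of "x + 1"]
  by (auto simp: forward_diff_def max_def algebra_simps)

lemma admissible_bellman: "admissible (bellman t V)"
proof -
  obtain d where d: "\<And>k. smallest_minimizer (\<lambda>a. G t V a k) (d k)"
    using G_has_smallest_minimizer[OF V] by metis
  note slope = slope_bellman[OF d]
  have slope_ge: "-cv \<le> dV (bellman t V) x k" for x k
    using forward_diff_nonneg_iff[OF d mono_forward_diff_G[OF V]] by (simp add: slope)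
  have nonneg: "0 \<le> bellman t V x k" for x k
  proof -
    have "cv * real_of_int x \<le> cv * real_of_int (max x (d k))"
      using cv_pos by (intro mult_left_mono) auto
    then show ?thesis
      using G_minus_linear_nonneg[OF V, of t "max x (d k)" k] by (simp add: bellman_eq_order_up_to[OF d])
  qed
  obtain C where C: "0 \<le> C" "\<And>a k. G t V a k - cv * real_of_int a \<le> C * (1 + \<bar>real_of_int a\<bar> + real k)"
    using G_minus_linear_growth[OF V] by blast
  have "bellman t V x k \<le> C * (1 + \<bar>real_of_int x\<bar> + real k)" for x k
    using smallest_minimizer_max_le[OF d[of k] mono_forward_diff_G[OF V] order_refl, of x] C(2)[of x k]
    by (simp add: bellman_eq_order_up_to[OF d])
  with C(1) have growth: "\<exists>M\<ge>0. \<forall>x k. bellman t V x k \<le> M * (1 + \<bar>real_of_int x\<bar> + real k)"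
    by blast
  have convex: "mono (\<lambda>x. dV (bellman t V) x k)" for k
  proof (rule monoI)
    fix x y :: int
    assume "x \<le> y"
    then show "dV (bellman t V) x k \<le> dV (bellman t V) y k"
      using slope_ge[where x = y and k = k] monoD[OF mono_forward_diff_G[OF V] \<open>x \<le> y\<close>, of t k]
      by (auto simp: slope)
  qed
  have "antimono (dV (bellman t V) x)" for x
  proof (rule antimonoI)
    fix k k' :: nat
    assume "k \<le> k'"
    have "d k \<le> d k'"
      using smallest_minimizer_le_if_forward_diff_le[OF d mono_forward_diff_G[OF V] d
            forward_diff_G_antimono[OF V \<open>k \<le> k'\<close>]] .
    then show "dV (bellman t V) x k' \<le> dV (bellman t V) x k"
      using slope_ge[where x = x and k = k] forward_diff_G_antimono[OF V \<open>k \<le> k'\<close>, of t x]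
      by (auto simp: slope)
  qed
  moreover have "\<exists>x. dV (bellman t V) x k \<le> 0" for k
    using cv_pos by (intro exI[of _ "d k - 1"]) (simp add: slope)
  ultimately show ?thesis
    unfolding admissible_def using nonneg growth slope_ge convex by blast
qed

end

lemma V_rem_Suc: "V_rem cv ch cb alpha0 beta0 N T (Suc m) = bellman (T - Suc m) (V_rem cv ch cb alpha0 beta0 N T m)"
  by (simp add: fun_eq_iff bellman_def G_def C_cost_def algebra_simps)

lemma admissible_V_til: "admissible (V_til cv ch cb alpha0 beta0 N T t)"
proof -
  have "admissible (V_rem cv ch cb alpha0 beta0 N T m)" for m
  proof (induction m)
    case 0
    show ?case using cv_pos by (auto simp: admissible_def forward_diff_def intro!: exI[of _ 0] monoI)
  next
    case (Suc m)
    then show ?case unfolding V_rem_Suc by (rule admissible_bellman)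
  qed
  then show ?thesis by (simp add: V_til_def)
qed

lemma G_fun_eq: "G_fun cv ch cb alpha0 beta0 N T t a k = G t (V_til cv ch cb alpha0 beta0 N T (t + 1)) a k"
  by (simp add: G_fun_def G_def)

lemma optimal_act_iff:
  "optimal_act cv ch cb alpha0 beta0 N T t x k a \<longleftrightarrow>
     x \<le> a \<and> (\<forall>b\<ge>x. G_fun cv ch cb alpha0 beta0 N T t a k \<le> G_fun cv ch cb alpha0 beta0 N T t b k)"
  by (simp add: optimal_act_def Q_act_def C_cost_def G_fun_def algebra_simps)

lemma order_up_to_optimal:
  "\<exists>\<delta>. smallest_minimizer (\<lambda>a. G_fun cv ch cb alpha0 beta0 N T t a k) \<delta>
      \<and> (\<forall>x. (x < \<delta> \<longrightarrow> optimal_act cv ch cb alpha0 beta0 N T t x k \<delta>)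
           \<and> (\<delta> \<le> x \<longrightarrow> optimal_act cv ch cb alpha0 beta0 N T t x k x))"
proof -
  let ?V = "V_til cv ch cb alpha0 beta0 N T (t + 1)"
  obtain \<delta> where \<delta>: "smallest_minimizer (\<lambda>a. G t ?V a k) \<delta>"
    using G_has_smallest_minimizer[OF admissible_V_til] by blast
  have optimal: "optimal_act cv ch cb alpha0 beta0 N T t x k (max x \<delta>)" for x
    using smallest_minimizer_max_le[OF \<delta> mono_forward_diff_G[OF admissible_V_til]]
    by (simp add: optimal_act_iff G_fun_eq)
  show ?thesis
  proof (intro exI[of _ \<delta>] conjI allI impI)
    show "smallest_minimizer (\<lambda>a. G_fun cv ch cb alpha0 beta0 N T t a k) \<delta>"
      using \<delta> by (simp add: G_fun_eq)
    show "optimal_act cv ch cb alpha0 beta0 N T t x k \<delta>" if "x < \<delta>" for x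
      using optimal[of x] that by (simp add: max_def)
    show "optimal_act cv ch cb alpha0 beta0 N T t x k x" if "\<delta> \<le> x" for x
      using optimal[of x] that by (simp add: max_def)
  qed
qed

lemma order_up_to_level_mono:
  assumes "k \<le> k'"
    and "smallest_minimizer (\<lambda>a. G_fun cv ch cb alpha0 beta0 N T t a k) \<delta>"
    and "smallest_minimizer (\<lambda>a. G_fun cv ch cb alpha0 beta0 N T t a k') \<delta>'"
  shows "\<delta> \<le> \<delta>'"
  using assms(2,3) unfolding G_fun_eq
  by (rule smallest_minimizer_le_if_forward_diff_le[OF _ mono_forward_diff_G[OF admissible_V_til]
        _ forward_diff_G_antimono[OF admissible_V_til assms(1)]])

end

theorem proposition5:
  fixes N T :: nat and alpha0 beta0 :: real and cv ch cb :: "nat \<Rightarrow> real"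
  assumes "N \<ge> 1" and "T \<ge> 1" and "alpha0 > 0" and "beta0 > 0"
    and "\<forall>i\<in>{1..N}. cv i > 0 \<and> ch i > 0 \<and> cb i > 0 \<and> cb i > cv i"
  shows "\<forall>t<T. \<forall>i\<in>{1..N}.
           (\<forall>k. \<exists>\<delta>. smallest_minimizer (\<lambda>a. G_fun (cv i) (ch i) (cb i) alpha0 beta0 N T t a k) \<delta>
                 \<and> (\<forall>x. (x < \<delta> \<longrightarrow> optimal_act (cv i) (ch i) (cb i) alpha0 beta0 N T t x k \<delta>)
                      \<and> (\<delta> \<le> x \<longrightarrow> optimal_act (cv i) (ch i) (cb i) alpha0 beta0 N T t x k x)))
         \<and> (\<forall>k k' \<delta> \<delta>'. k \<le> k'
              \<and> smallest_minimizer (\<lambda>a. G_fun (cv i) (ch i) (cb i) alpha0 beta0 N T t a k) \<delta>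
              \<and> smallest_minimizer (\<lambda>a. G_fun (cv i) (ch i) (cb i) alpha0 beta0 N T t a k') \<delta>'
              \<longrightarrow> \<delta> \<le> \<delta>')"
proof -
  \<comment> \<open>The policy structure holds at every epoch.\<close>
  have item: "spare_parts (cv i) (ch i) (cb i) alpha0 beta0 N" if "i \<in> {1..N}" for i
    using assms that by unfold_locales auto
  show ?thesis
    using spare_parts.order_up_to_optimal[OF item] spare_parts.order_up_to_level_mono[OF item]
    by blast
qed

end
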